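(* Let $(\mu,u)$ be a classical structure on $A$ with spiders $\Xi_n^m$ and let $H$ be a complementary endomorphism for it. Then $$(\Xi_3^1\otimes 1_A)\circ(1_A\otimes H\otimes H\otimes 1_A)\circ(1_A\otimes\Xi_1^3)=1_{A\otimes A}.$$
   Context: Setting. $\mathbf C^{pure}$ is a strict symmetric monoidal category with monoidal unit $\mathrm I$, symmetry $\sigma$ and a dagger functor $(-)^\dagger$ (identity on objects, contravariant, involutive, strict monoidal), in which every object $A$ is self-dual: there is $\eta_A:\mathrm I\to A\otimes A$ with $\epsilon_A:=\eta_A^\dagger$, $(\epsilon_A\otimes 1_A)\circ(1_A\otimes\eta_A)=1_A$ and $\sigma_{A,A}\circ\eta_A=\eta_A$. A morphism $U$ is unitary if $U^\dagger\circ U=1$ and $U\circ U^\dagger=1$. Classical structure on $A$: morphisms $\mu:A\otimes A\to A$ and $u:\mathrm I\to A$, with $\delta:=\mu^\dagger$, such that $\mu$ is associative with unit $u$, $\mu\circ\sigma_{A,A}=\mu$, $(1_A\otimes\mu)\circ(\delta\otimes 1_A)=\delta\circ\mu$, $\mu\circ\delta=1_A$, and $\eta_A=\delta\circ u$. Spiders: $\mu_0:=u$, $\mu_1:=1_A$, $\mu_{k+1}:=\mu\circ(\mu_k\otimes 1_A)$, and $\Xi_n^m:=\mu_m^\dagger\circ\mu_n:A^{\otimes n}\to A^{\otimes m}$. Complementary endomorphism: $H:A\to A$ with $(H\otimes 1_A)\circ\eta_A=(1_A\otimes H)\circ\eta_A$, $H^\dagger=H$, $H$ unitary, and $\Xi_2^1\circ(H\otimes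 H)\circ\Xi_1^2=\Xi_0^1\circ\Xi_1^0$. *)

theory Defs
  imports Main
begin

text \<open>Every element of the morphism type is a morphism; composition,
  tensor etc. are total functions, and the axioms only constrain composable data.\<close>

record ('o, 'm) sd_cat =
  cdom  :: "'m \<Rightarrow> 'o"
  ccod  :: "'m \<Rightarrow> 'o"
  ccomp :: "'m \<Rightarrow> 'm \<Rightarrow> 'm"      (* ccomp g f = g \<circ> f *)
  cid   :: "'o \<Rightarrow> 'm"
  ctob  :: "'o \<Rightarrow> 'o \<Rightarrow> 'o"
  ctm   :: "'m \<Rightarrow> 'm \<Rightarrow> 'm"
  cunit :: "'o"
  csym  :: "'o \<Rightarrow> 'o \<Rightarrow> 'm"     (* sigma_{A,B} : A \<otimes> B \<rightarrow> B \<otimes> A *)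
  cdag  :: "'m \<Rightarrow> 'm"
  ceta  :: "'o \<Rightarrow> 'm"           (* eta_A : I \<rightarrow> A \<otimes> A *)

locale sd_dagger_smc =
  fixes C :: "('o, 'm) sd_cat"
  assumes dom_id: "cdom C (cid C A) = A"
    and cod_id: "ccod C (cid C A) = A"
    and dom_comp: "cdom C g = ccod C f \<Longrightarrow> cdom C (ccomp C g f) = cdom C f"
    and cod_comp: "cdom C g = ccod C f \<Longrightarrow> ccod C (ccomp C g f) = ccod C g"
    and comp_assoc: "cdom C h = ccod C g \<Longrightarrow> cdom C g = ccod C f \<Longrightarrow>
        ccomp C (ccomp C h g) f = ccomp C h (ccomp C g f)"
    and comp_id_right: "ccomp C f (cid C (cdom C f)) = f"
    and comp_id_left: "ccomp C (cid C (ccod C f)) f = f"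
    and dom_tm: "cdom C (ctm C f g) = ctob C (cdom C f) (cdom C g)"
    and cod_tm: "ccod C (ctm C f g) = ctob C (ccod C f) (ccod C g)"
    and tm_id: "ctm C (cid C A) (cid C B) = cid C (ctob C A B)"
    and interchange: "cdom C g = ccod C f \<Longrightarrow> cdom C g' = ccod C f' \<Longrightarrow>
        ctm C (ccomp C g f) (ccomp C g' f') = ccomp C (ctm C g g') (ctm C f f')"
    and tob_assoc: "ctob C (ctob C A B) D = ctob C A (ctob C B D)"
    and tob_unit_left: "ctob C (cunit C) A = A"
    and tob_unit_right: "ctob C A (cunit C) = A"
    and tm_assoc: "ctm C (ctm C f g) h = ctm C f (ctm C g h)"
    and tm_unit_left: "ctm C (cid C (cunit C)) f = f"
    and tm_unit_right: "ctm C f (cid C (cunit C)) = f"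
    and dom_sym: "cdom C (csym C A B) = ctob C A B"
    and cod_sym: "ccod C (csym C A B) = ctob C B A"
    and sym_natural: "ccomp C (csym C (ccod C f) (ccod C g)) (ctm C f g)
        = ccomp C (ctm C g f) (csym C (cdom C f) (cdom C g))"
    and sym_inverse: "ccomp C (csym C B A) (csym C A B) = cid C (ctob C A B)"
    and sym_hexagon: "csym C A (ctob C B D)
        = ccomp C (ctm C (cid C B) (csym C A D)) (ctm C (csym C A B) (cid C D))"
    and dom_dag: "cdom C (cdag C f) = ccod C f"
    and cod_dag: "ccod C (cdag C f) = cdom C f"
    and dag_comp: "cdom C g = ccod C f \<Longrightarrow> cdag C (ccomp C g f) = ccomp C (cdag C f) (cdag C g)"
    and dag_dag: "cdag C (cdag C f) = f"
    and dag_id: "cdag C (cid C A) = cid C A"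
    and dag_tm: "cdag C (ctm C f g) = ctm C (cdag C f) (cdag C g)"
    and dag_sym: "cdag C (csym C A B) = csym C B A"
    and dom_eta: "cdom C (ceta C A) = cunit C"
    and cod_eta: "ccod C (ceta C A) = ctob C A A"
    and snake: "ccomp C (ctm C (cdag C (ceta C A)) (cid C A)) (ctm C (cid C A) (ceta C A)) = cid C A"
    and sym_eta: "ccomp C (csym C A A) (ceta C A) = ceta C A"

fun spider :: "('o, 'm) sd_cat \<Rightarrow> 'o \<Rightarrow> 'm \<Rightarrow> 'm \<Rightarrow> nat \<Rightarrow> 'm" where
  "spider C A mu u 0 = u"
| "spider C A mu u (Suc 0) = cid C A"
| "spider C A mu u (Suc (Suc k)) = ccomp C mu (ctm C (spider C A mu u (Suc k)) (cid C A))"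

definition Xi :: "('o, 'm) sd_cat \<Rightarrow> 'o \<Rightarrow> 'm \<Rightarrow> 'm \<Rightarrow> nat \<Rightarrow> nat \<Rightarrow> 'm" where
  "Xi C A mu u n m = ccomp C (cdag C (spider C A mu u m)) (spider C A mu u n)"

definition classical_structure :: "('o, 'm) sd_cat \<Rightarrow> 'o \<Rightarrow> 'm \<Rightarrow> 'm \<Rightarrow> bool" where
  "classical_structure C A mu u \<longleftrightarrow>
     cdom C mu = ctob C A A \<and> ccod C mu = A \<and> cdom C u = cunit C \<and> ccod C u = A \<and>
     ccomp C mu (ctm C mu (cid C A)) = ccomp C mu (ctm C (cid C A) mu) \<and>
     ccomp C mu (ctm C u (cid C A)) = cid C A \<and>
     ccomp C mu (ctm C (cid C A) u) = cid C A \<and>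
     ccomp C mu (csym C A A) = mu \<and>
     ccomp C (ctm C (cid C A) mu) (ctm C (cdag C mu) (cid C A)) = ccomp C (cdag C mu) mu \<and>
     ccomp C mu (cdag C mu) = cid C A \<and>
     ceta C A = ccomp C (cdag C mu) u"

definition complementary :: "('o, 'm) sd_cat \<Rightarrow> 'o \<Rightarrow> 'm \<Rightarrow> 'm \<Rightarrow> 'm \<Rightarrow> bool" where
  "complementary C A mu u H \<longleftrightarrow>
     cdom C H = A \<and> ccod C H = A \<and>
     ccomp C (ctm C H (cid C A)) (ceta C A) = ccomp C (ctm C (cid C A) H) (ceta C A) \<and>
     cdag C H = H \<and>
     ccomp C (cdag C H) H = cid C A \<and> ccomp C H (cdag C H) = cid C A \<and>
     ccomp C (Xi C A mu u 2 1) (ccomp C (ctm C H H) (Xi C A mu u 1 2))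
       = ccomp C (Xi C A mu u 0 1) (Xi C A mu u 1 0)"

end

theory Submission
  imports Defs
begin

(*
  Write \<delta> = \<mu>\<dagger>.  By associativity the spiders evaluate to
    \<Xi>_3^1 = \<mu> \<circ> (1 \<otimes> \<mu>),   \<Xi>_1^3 = (\<delta> \<otimes> 1) \<circ> \<delta>,
  and the complementarity law says \<mu> \<circ> (H \<otimes> H) \<circ> \<delta> = u \<circ> u\<dagger>.
  Hence, whiskering everything with identities,
    (\<Xi>_3^1 \<otimes> 1) \<circ> (1 \<otimes> H \<otimes> H \<otimes> 1) \<circ> (1 \<otimes> \<Xi>_1^3)
      = (\<mu> \<otimes> 1) \<circ> (1 \<otimes> [\<mu> (H \<otimes> H) \<delta>] \<otimes> 1) \<circ> (1 \<otimes> \<delta>)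
      = [(\<mu> \<circ> (1 \<otimes> u)) \<otimes> 1] \<circ> [1 \<otimes> ((u\<dagger> \<otimes> 1) \<circ> \<delta>)]  =  1,
  using the unit law and its dagger, the counit law.
*)

context sd_dagger_smc
begin

lemma tm_comp_left:
  assumes "cdom C g = ccod C f"
  shows "ctm C (ccomp C g f) h = ccomp C (ctm C g (cid C (ccod C h))) (ctm C f h)"
proof -
  have "ctm C (ccomp C g f) h = ctm C (ccomp C g f) (ccomp C (cid C (ccod C h)) h)"
    by (simp add: comp_id_left)
  also have "\<dots> = ccomp C (ctm C g (cid C (ccod C h))) (ctm C f h)"
    using assms by (simp add: interchange dom_id)
  finally show ?thesis .
qed

lemma tm_comp_right:
  assumes "cdom C g = ccod C f"
  shows "ctm C h (ccomp C g f) = ccomp C (ctm C (cid C (ccod C h)) g) (ctm C h f)"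
proof -
  have "ctm C h (ccomp C g f) = ctm C (ccomp C (cid C (ccod C h)) h) (ccomp C g f)"
    by (simp add: comp_id_left)
  also have "\<dots> = ccomp C (ctm C (cid C (ccod C h)) g) (ctm C h f)"
    using assms by (simp add: interchange dom_id)
  finally show ?thesis .
qed

lemma whisker_comp:
  assumes "cdom C g = ccod C f"
  shows "ctm C (cid C X) (ctm C (ccomp C g f) (cid C Y))
       = ccomp C (ctm C (cid C X) (ctm C g (cid C Y))) (ctm C (cid C X) (ctm C f (cid C Y)))"
proof -
  have "cdom C (ctm C g (cid C Y)) = ccod C (ctm C f (cid C Y))"
    using assms by (simp add: dom_tm cod_tm dom_id cod_id)
  then show ?thesis
    using assms by (simp add: tm_comp_left tm_comp_right cod_id)
qed

lemmas typing = dom_tm cod_tm dom_id cod_id dom_dag cod_dag dom_comp cod_comp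
  tob_unit_left tob_unit_right tob_assoc

end

locale classical = sd_dagger_smc +
  fixes A :: 'o and mu u :: 'm
  assumes classical: "classical_structure C A mu u"
begin

lemma mu_dom [simp]: "cdom C mu = ctob C A A"
  and mu_cod [simp]: "ccod C mu = A"
  and u_dom [simp]: "cdom C u = cunit C"
  and u_cod [simp]: "ccod C u = A"
  using classical by (auto simp: classical_structure_def)

lemma mu_assoc: "ccomp C mu (ctm C mu (cid C A)) = ccomp C mu (ctm C (cid C A) mu)"
  and mu_unit_right: "ccomp C mu (ctm C (cid C A) u) = cid C A"
  and mu_unit_left: "ccomp C mu (ctm C u (cid C A)) = cid C A"
  using classical by (auto simp: classical_structure_def)

lemma counit_left: "ccomp C (ctm C (cdag C u) (cid C A)) (cdag C mu) = cid C A"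
  using arg_cong[OF mu_unit_left, of "cdag C"]
  by (simp add: dag_comp dag_tm dag_id typing)

lemma spider_2: "spider C A mu u 2 = mu"
proof -
  have "spider C A mu u (Suc (Suc 0)) = ccomp C mu (cid C (cdom C mu))"
    by (simp add: tm_id)
  then show ?thesis by (simp only: comp_id_right numeral_2_eq_2)
qed

lemma spider_3: "spider C A mu u 3 = ccomp C mu (ctm C mu (cid C A))"
  using spider_2 by (simp add: numeral_2_eq_2 numeral_3_eq_3)

lemma Xi_2_1: "Xi C A mu u 2 1 = mu"
  and Xi_1_2: "Xi C A mu u 1 2 = cdag C mu"
  and Xi_0_1: "Xi C A mu u 0 1 = u"
  and Xi_1_0: "Xi C A mu u 1 0 = cdag C u"
  using comp_id_left[of mu] comp_id_right[of "cdag C mu"]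
    comp_id_left[of u] comp_id_right[of "cdag C u"]
  by (simp_all add: Xi_def spider_2 dag_id typing)

lemma Xi_3_1: "Xi C A mu u 3 1 = ccomp C mu (ctm C (cid C A) mu)"
  using comp_id_left[of "ccomp C mu (ctm C mu (cid C A))"]
  by (simp add: Xi_def spider_3 dag_id typing mu_assoc)

lemma Xi_1_3: "Xi C A mu u 1 3 = ccomp C (ctm C (cdag C mu) (cid C A)) (cdag C mu)"
  using comp_id_right[of "ccomp C (ctm C (cdag C mu) (cid C A)) (cdag C mu)"]
  by (simp add: Xi_def spider_3 dag_comp dag_tm dag_id typing)

end

locale complementary_pair = classical +
  fixes H :: 'm
  assumes complementary: "complementary C A mu u H"
begin

lemma H_dom [simp]: "cdom C H = A"
  and H_cod [simp]: "ccod C H = A"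
  using complementary by (auto simp: complementary_def)

lemma complementarity: "ccomp C mu (ccomp C (ctm C H H) (cdag C mu)) = ccomp C u (cdag C u)"
  using complementary unfolding complementary_def Xi_2_1 Xi_1_2 Xi_0_1 Xi_1_0 by simp

lemma whiskered_complementarity:
  "ccomp C (ctm C (cid C A) (ctm C mu (cid C A)))
     (ccomp C (ctm C (cid C A) (ctm C H (ctm C H (cid C A))))
        (ctm C (cid C A) (ctm C (cdag C mu) (cid C A))))
   = ccomp C (ctm C (cid C A) (ctm C u (cid C A))) (ctm C (cid C A) (ctm C (cdag C u) (cid C A)))"
  using arg_cong[OF complementarity, of "\<lambda>f. ctm C (cid C A) (ctm C f (cid C A))"]
  by (simp add: whisker_comp typing tm_assoc)

lemma whiskered_unit:
  "ccomp C (ctm C mu (cid C A)) (ctm C (cid C A) (ctm C u (cid C A))) = cid C (ctob C A A)"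
  using arg_cong[OF mu_unit_right, of "\<lambda>f. ctm C f (cid C A)"]
  by (simp add: tm_comp_left typing tm_assoc tm_id)

lemma whiskered_counit:
  "ccomp C (ctm C (cid C A) (ctm C (cdag C u) (cid C A))) (ctm C (cid C A) (cdag C mu))
   = cid C (ctob C A A)"
  using arg_cong[OF counit_left, of "ctm C (cid C A)"]
  by (simp add: tm_comp_right typing tm_id)

end

theorem mainTheorem3:
  fixes C :: "('o, 'm) sd_cat" and A :: 'o and mu u H :: 'm
  assumes "sd_dagger_smc C"
    and "classical_structure C A mu u"
    and "complementary C A mu u H"
  shows "ccomp C (ctm C (Xi C A mu u 3 1) (cid C A))
           (ccomp C (ctm C (cid C A) (ctm C H (ctm C H (cid C A))))
                    (ctm C (cid C A) (Xi C A mu u 1 3)))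
         = cid C (ctob C A A)"
proof -
  interpret complementary_pair C A mu u H
    using assms by (simp add: complementary_pair_def classical_def complementary_pair_axioms_def
        classical_axioms_def)
  let ?i = "cid C A" and ?d = "cdag C mu"
  have "ccomp C (ctm C (Xi C A mu u 3 1) ?i)
          (ccomp C (ctm C ?i (ctm C H (ctm C H ?i))) (ctm C ?i (Xi C A mu u 1 3)))
      = ccomp C (ctm C mu ?i)
          (ccomp C (ccomp C (ctm C ?i (ctm C mu ?i))
             (ccomp C (ctm C ?i (ctm C H (ctm C H ?i))) (ctm C ?i (ctm C ?d ?i))))
           (ctm C ?i ?d))"
    unfolding Xi_3_1 Xi_1_3 by (simp add: tm_comp_left tm_comp_right tm_assoc comp_assoc typing)
  also have "\<dots> = ccomp C (ccomp C (ctm C mu ?i) (ctm C ?i (ctm C u ?i)))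
                    (ccomp C (ctm C ?i (ctm C (cdag C u) ?i)) (ctm C ?i ?d))"
    by (simp add: whiskered_complementarity comp_assoc typing)
  also have "\<dots> = cid C (ctob C A A)"
    using comp_id_left[of "cid C (ctob C A A)"]
    by (simp only: whiskered_unit whiskered_counit cod_id)
  finally show ?thesis .
qed

end
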